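(* Let $n_1,\dots,n_m$ be positive integers, $w=n_1+\dots+n_m$, and $x_1,\dots,x_m\in\mathbb C$ with $|x_i|<1$. Then $$\mathrm{Li}_{n_1,\dots,n_m}(x_1,\dots,x_m)=\int_{C_w}\Omega_{n_1,\dots,n_m}(x_1,\dots,x_m).$$
   Context: $\mathrm{Li}_{n_1,\dots,n_m}(x_1,\dots,x_m)=\sum_{0<k_1<\dots<k_m}\frac{x_1^{k_1}\cdots x_m^{k_m}}{k_1^{n_1}\cdots k_m^{n_m}}$. Put $N_k=n_1+\dots+n_k$ ($N_0=0$). Let $u_1,\dots,u_w$ be coordinates on $\mathbb A^w$ and $C_w=[0,1]^w$ the standard cube in the $u$-coordinates with its standard orientation. Define $v_j=x_ku_j$ if $j=N_k$ for some $k\ge1$, and $v_j=u_j$ otherwise. For $1\le j\le w$ put $P_j=v_jv_{j+1}\cdots v_w$. Then $\Omega_{n_1,\dots,n_m}(x_1,\dots,x_m)=\eta_1\wedge\eta_2\wedge\cdots\wedge\eta_w$, where $\eta_j=\frac{dP_j}{1-P_j}$ if $j=N_k+1$ for some $k\in\{0,\dots,m-1\}$ (the first index of a block) and $\eta_j=\frac{dP_j}{P_j}$ otherwise; the integral over $C_w$ is the integral of the pullback of this form under $u\mapsto v$. (E.g. for $m=1,n_1=2$: $\Omega_2(x)=\frac{d(v_1v_2)}{1-v_1v_2}\wedge\frac{dv_2}{v_2}$ with $v_1=u_1,v_2=xu_2$.) *)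

theory Defs
  imports "HOL-Analysis.Analysis"
begin

text \<open>Indices are 1-based as in the paper: n 1, ..., n m are the weights,
  x 1, ..., x m the arguments; cube coordinates are u 1, ..., u w.\<close>

text \<open>Multiple polylogarithm: sum over 0 < k 1 < ... < k m (tuples k extended by 0
  outside 1..m so that each tuple is represented exactly once).\<close>
definition Li :: "nat \<Rightarrow> (nat \<Rightarrow> nat) \<Rightarrow> (nat \<Rightarrow> complex) \<Rightarrow> complex" where
  "Li m n x = infsum (\<lambda>k. \<Prod>i=1..m. x i ^ k i / of_nat (k i) ^ n i)
     {k :: nat \<Rightarrow> nat. (\<forall>i. i \<notin> {1..m} \<longrightarrow> k i = 0) \<and> (\<forall>i\<in>{1..m}. 0 < k i)
        \<and> (\<forall>i\<in>{1..<m}. k i < k (Suc i))}"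

definition Nw :: "(nat \<Rightarrow> nat) \<Rightarrow> nat \<Rightarrow> nat" where
  "Nw n k = (\<Sum>i=1..k. n i)"

definition vcoord :: "nat \<Rightarrow> (nat \<Rightarrow> nat) \<Rightarrow> (nat \<Rightarrow> complex) \<Rightarrow> (nat \<Rightarrow> real) \<Rightarrow> nat \<Rightarrow> complex" where
  "vcoord m n x u j =
     (if \<exists>k\<in>{1..m}. j = Nw n k then x (THE k. k \<in> {1..m} \<and> j = Nw n k) * complex_of_real (u j)
      else complex_of_real (u j))"

definition Pprod :: "nat \<Rightarrow> (nat \<Rightarrow> nat) \<Rightarrow> (nat \<Rightarrow> complex) \<Rightarrow> (nat \<Rightarrow> real) \<Rightarrow> nat \<Rightarrow> complex" where
  "Pprod m n x u j = (\<Prod>l=j..Nw n m. vcoord m n x u l)"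

text \<open>Coefficient of du_i in the pullback of the 1-form eta_j:
  eta_j = dP_j/(1-P_j) if j = N_k + 1 for some k in {0..m-1}, and dP_j/P_j otherwise.\<close>
definition eta_coeff :: "nat \<Rightarrow> (nat \<Rightarrow> nat) \<Rightarrow> (nat \<Rightarrow> complex) \<Rightarrow> (nat \<Rightarrow> real) \<Rightarrow> nat \<Rightarrow> nat \<Rightarrow> complex" where
  "eta_coeff m n x u j i =
     (if \<exists>k\<in>{0..<m}. j = Nw n k + 1 then 1 / (1 - Pprod m n x u j) else 1 / Pprod m n x u j)
     * vector_derivative (\<lambda>t. Pprod m n x (u(i := t)) j) (at (u i))"

text \<open>Coefficient of du_1 \<and> ... \<and> du_w in the pullback of
  Omega = eta_1 \<and> ... \<and> eta_w (expansion of the wedge product of 1-forms).\<close>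
definition Omega_coeff :: "nat \<Rightarrow> (nat \<Rightarrow> nat) \<Rightarrow> (nat \<Rightarrow> complex) \<Rightarrow> (nat \<Rightarrow> real) \<Rightarrow> complex" where
  "Omega_coeff m n x u =
     (\<Sum>\<sigma> | \<sigma> permutes {1..Nw n m}.
        of_int (sign \<sigma>) * (\<Prod>j=1..Nw n m. eta_coeff m n x u j (\<sigma> j)))"

text \<open>The standard cube C_w = [0,1]^w with Lebesgue measure (standard orientation).\<close>
definition cube :: "nat \<Rightarrow> (nat \<Rightarrow> real) measure" where
  "cube w = PiM {1..w} (\<lambda>_. lebesgue_on {0..1})"

end

theory Submission
  imports Defs "HOL-Probability.Infinite_Product_Measure"
begin

text \<open>P_j depends only on u_j, ..., u_w, so the pullback of Omega is upper triangular and
  its coefficient is the product of the diagonal entries, which equals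
  (prod_k P_(s_k) / (1 - P_(s_k))) / (u_1 ... u_w), where s_k = N_(k-1) + 1 is the first
  index of block k. Expanding every factor P_(s_k) / (1 - P_(s_k)) into the geometric series
  over d_k >= 1 writes Omega as a sum of monomials prod_l a_l^(E_l) u_l^(E_l - 1), where
  v_l = a_l u_l (vcoord_scale) and E_l (monomial_exponent) is the exponent of v_l. Each monomial
  integrates over the cube to prod_l a_l^(E_l) / E_l; on block i the exponent is
  E_l = d_1 + ... + d_i = k_i, so the integral is the term of Li at k. The same expansion at
  u = 1 is an absolutely convergent majorant of the integrals of the norms, which justifies
  integrating termwise.\<close>

section \<open>Products, series and termwise integration\<close>

lemma leibniz_sum_upper_triangular:
  fixes f :: "nat \<Rightarrow> nat \<Rightarrow> 'a::comm_ring_1"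
  assumes "finite S" and lower_zero: "\<And>i j. i \<in> S \<Longrightarrow> j < i \<Longrightarrow> f i j = 0"
  shows "(\<Sum>\<sigma> | \<sigma> permutes S. of_int (sign \<sigma>) * (\<Prod>i\<in>S. f i (\<sigma> i))) = (\<Prod>i\<in>S. f i i)"
proof -
  let ?F = "\<lambda>\<sigma>. of_int (sign \<sigma>) * (\<Prod>i\<in>S. f i (\<sigma> i)) :: 'a"
  have "?F \<sigma> = 0" if "\<sigma> \<in> {\<sigma>. \<sigma> permutes S} - {id}" for \<sigma>
  proof -
    from that have "\<sigma> permutes S" "\<sigma> \<noteq> id" by auto
    then obtain i where "i \<in> S" "\<sigma> i < i"
      using permutes_natset_ge[of \<sigma> S] by (meson not_le)
    then have "(\<Prod>i\<in>S. f i (\<sigma> i)) = 0"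
      using assms(1) lower_zero by (intro prod_zero) auto
    then show ?thesis by simp
  qed
  then have "(\<Sum>\<sigma> | \<sigma> permutes S. ?F \<sigma>) = ?F id"
    using sum.remove[of "{\<sigma>. \<sigma> permutes S}" id ?F] assms(1)
    by (simp add: finite_permutations permutes_id)
  then show ?thesis by (simp add: sign_id)
qed

lemma prod_power_prod:
  fixes \<alpha> :: "'b \<Rightarrow> 'a::comm_semiring_1"
  assumes "finite K" "finite L" "\<And>k. k \<in> K \<Longrightarrow> A k \<subseteq> L"
  shows "(\<Prod>k\<in>K. (\<Prod>l\<in>A k. \<alpha> l) ^ d k) = (\<Prod>l\<in>L. \<alpha> l ^ (\<Sum>k\<in>K. if l \<in> A k then d k else 0))"
proof -
  have "(\<Prod>l\<in>A k. \<alpha> l) ^ d k = (\<Prod>l\<in>L. if l \<in> A k then \<alpha> l ^ d k else 1)" if "k \<in> K" for k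
  proof -
    have "{l \<in> L. l \<in> A k} = A k" using assms(3)[OF that] by auto
    then show ?thesis using assms(2) by (simp add: prod_power_distrib flip: prod.inter_filter)
  qed
  then have "(\<Prod>k\<in>K. (\<Prod>l\<in>A k. \<alpha> l) ^ d k) = (\<Prod>k\<in>K. \<Prod>l\<in>L. if l \<in> A k then \<alpha> l ^ d k else 1)"
    by (rule prod.cong[OF refl])
  also have "\<dots> = (\<Prod>l\<in>L. \<Prod>k\<in>K. if l \<in> A k then \<alpha> l ^ d k else 1)"
    by (rule prod.swap)
  also have "\<dots> = (\<Prod>l\<in>L. \<alpha> l ^ (\<Sum>k\<in>K. if l \<in> A k then d k else 0))"
    unfolding power_sum by (intro prod.cong refl) simp
  finally show ?thesis .
qed

lemma prod_le_factor:
  fixes f :: "'a \<Rightarrow> 'b::linordered_semidom"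
  assumes "finite A" "j \<in> A" "\<And>l. l \<in> A \<Longrightarrow> 0 \<le> f l \<and> f l \<le> 1"
  shows "(\<Prod>l\<in>A. f l) \<le> f j"
proof -
  have "(\<Prod>l\<in>A. f l) = f j * (\<Prod>l\<in>A - {j}. f l)" using assms(1,2) by (simp add: prod.remove)
  also have "\<dots> \<le> f j" using assms by (intro mult_left_le prod_le_1 prod_nonneg) auto
  finally show ?thesis .
qed

lemma has_sum_prod_geometric_PiE:
  fixes q :: "'i \<Rightarrow> 'a::{real_normed_field, banach, second_countable_topology}"
  assumes "finite K" and q: "\<And>k. k \<in> K \<Longrightarrow> norm (q k) < 1"
  shows "((\<lambda>d. \<Prod>k\<in>K. q k ^ d k) has_sum (\<Prod>k\<in>K. q k / (1 - q k))) (PiE K (\<lambda>_. {1..}))"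
proof -
  have "(\<lambda>j. norm (q k ^ j)) summable_on {1..}" if "k \<in> K" for k
    using has_sum_geometric_from_1[of "norm (q k)"] q[OF that]
    by (auto simp: summable_on_def norm_power)
  then have abs: "Infinite_Sum.abs_summable_on (\<lambda>j. q k ^ j) {1..}" if "k \<in> K" for k
    using that by blast
  then have "Infinite_Set_Sum.abs_summable_on (\<lambda>j. q k ^ j) {1..}" if "k \<in> K" for k
    using that abs_summable_equivalent by blast
  then have "Infinite_Set_Sum.abs_summable_on (\<lambda>d. \<Prod>k\<in>K. q k ^ d k) (PiE K (\<lambda>_. {1..}))"
    by (rule abs_summable_on_prod_PiE[where f = "\<lambda>k j. q k ^ j", OF assms(1) countableI_type])
  then have "Infinite_Sum.abs_summable_on (\<lambda>d. \<Prod>k\<in>K. q k ^ d k) (PiE K (\<lambda>_. {1..}))"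
    by (simp only: abs_summable_equivalent)
  then have summable: "(\<lambda>d. \<Prod>k\<in>K. q k ^ d k) summable_on PiE K (\<lambda>_. {1..})"
    by (rule abs_summable_summable)
  have "infsum (\<lambda>d. \<Prod>k\<in>K. q k ^ d k) (PiE K (\<lambda>_. {1..})) = (\<Prod>k\<in>K. infsum (\<lambda>j. q k ^ j) {1..})"
    using assms(1) abs by (rule infsum_prod_PiE_abs)
  also have "\<dots> = (\<Prod>k\<in>K. q k / (1 - q k))"
    by (intro prod.cong refl infsumI has_sum_geometric_from_1 q) auto
  finally show ?thesis using has_sum_infsum[OF summable] by simp
qed

lemma has_bochner_integral_suminf:
  fixes g :: "nat \<Rightarrow> 'a \<Rightarrow> 'b::{banach, second_countable_topology}"
  assumes integrable: "\<And>k. integrable M (g k)"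
    and summable_norm: "summable (\<lambda>k. \<integral>x. norm (g k x) \<partial>M)"
    and sums: "AE x in M. summable (\<lambda>k. norm (g k x)) \<and> (\<lambda>k. g k x) sums f x"
    and "f \<in> borel_measurable M"
  shows "has_bochner_integral M f (\<Sum>k. integral\<^sup>L M (g k))"
proof -
  have ae_summable: "AE x in M. summable (\<lambda>k. norm (g k x))" using sums by auto
  have sum_integral: "has_bochner_integral M (\<lambda>x. \<Sum>k. g k x) (\<Sum>k. integral\<^sup>L M (g k))"
    using integrable_suminf[OF integrable ae_summable summable_norm]
      integral_suminf[OF integrable ae_summable summable_norm]
    by (simp add: has_bochner_integral_iff)
  moreover have "AE x in M. f x = (\<Sum>k. g k x)"
    using sums by eventually_elim (simp add: sums_iff)
  ultimately show ?thesis
    by (simp add: has_bochner_integral_cong_AE[OF assms(4) borel_measurable_has_bochner_integral[OF sum_integral]])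
qed

lemma has_bochner_integral_infsum:
  fixes g :: "'i \<Rightarrow> 'a \<Rightarrow> complex"
  assumes "countable D" "infinite D"
    and integrable: "\<And>i. i \<in> D \<Longrightarrow> integrable M (g i)"
    and summable_norm: "(\<lambda>i. \<integral>x. norm (g i x) \<partial>M) summable_on D"
    and has_sum: "AE x in M. ((\<lambda>i. g i x) has_sum f x) D"
    and "f \<in> borel_measurable M"
  shows "has_bochner_integral M f (\<Sum>\<^sub>\<infinity>i\<in>D. integral\<^sup>L M (g i))"
proof -
  obtain e :: "nat \<Rightarrow> 'i" where e: "bij_betw e UNIV D"
    using bij_betw_from_nat_into[OF assms(1,2)] by blast
  have "e k \<in> D" for k using e by (auto simp: bij_betw_def)
  then have integrable_e: "integrable M (g (e k))" for k by (rule integrable)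
  have "(\<lambda>k. \<integral>x. norm (g (e k) x) \<partial>M) summable_on UNIV"
    using summable_norm summable_on_reindex_bij_betw[OF e, of "\<lambda>i. \<integral>x. norm (g i x) \<partial>M"] by simp
  then have summable_norm_e: "summable (\<lambda>k. \<integral>x. norm (g (e k) x) \<partial>M)"
    by (simp add: summable_on_UNIV_nonneg_real_iff)
  have "AE x in M. summable (\<lambda>k. norm (g (e k) x)) \<and> (\<lambda>k. g (e k) x) sums f x"
    using has_sum
  proof eventually_elim
    case (elim x)
    then have has_sum_e: "((\<lambda>k. g (e k) x) has_sum f x) UNIV"
      using has_sum_reindex_bij_betw[OF e, of "\<lambda>i. g i x"] by simp
    then have "(\<lambda>k. g (e k) x) summable_on UNIV"
      by (auto simp: summable_on_def)
    then have "(\<lambda>k. norm (g (e k) x)) summable_on UNIV"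
      by (simp add: summable_on_iff_abs_summable_on_complex)
    with has_sum_e show ?case
      by (simp add: summable_on_UNIV_nonneg_real_iff has_sum_imp_sums)
  qed
  with integrable_e summable_norm_e assms(6)
  have integral: "has_bochner_integral M f (\<Sum>k. integral\<^sup>L M (g (e k)))"
    by (intro has_bochner_integral_suminf)
  have summable: "summable (\<lambda>k. norm (integral\<^sup>L M (g (e k))))"
    by (rule summable_comparison_test'[OF summable_norm_e]) (simp add: integral_norm_bound)
  then have "((\<lambda>k. integral\<^sup>L M (g (e k))) has_sum (\<Sum>k. integral\<^sup>L M (g (e k)))) UNIV"
    by (rule norm_summable_imp_has_sum) (rule summable_sums[OF summable_norm_cancel[OF summable]])
  then have "((\<lambda>i. integral\<^sup>L M (g i)) has_sum (\<Sum>k. integral\<^sup>L M (g (e k)))) D"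
    using has_sum_reindex_bij_betw[OF e, of "\<lambda>i. integral\<^sup>L M (g i)"] by simp
  then have "(\<Sum>\<^sub>\<infinity>i\<in>D. integral\<^sup>L M (g i)) = (\<Sum>k. integral\<^sup>L M (g (e k)))"
    by (rule infsumI)
  with integral show ?thesis by simp
qed

section \<open>Monomials on the unit cube\<close>

lemma prob_space_lebesgue_on_unit_interval: "prob_space (lebesgue_on {0..1::real})"
  by (rule prob_spaceI) (simp add: emeasure_restrict_space)

lemma space_cube: "space (cube w) = PiE {1..w} (\<lambda>_. {0..1})"
  by (simp add: cube_def space_PiM space_restrict_space)

lemma AE_cube_coordinates_pos: "AE u in cube w. \<forall>l\<in>{1..w}. 0 < u l"
proof -
  have "AE t in lebesgue_on {0..1::real}. t \<noteq> 0"
    by (rule AE_I'[of "{0}"]) (auto simp: null_sets_restrict_space)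
  then have "AE t in lebesgue_on {0..1::real}. 0 < t"
    using AE_space by eventually_elim (auto simp: space_restrict_space)
  then have "AE u in cube w. 0 < u l" if "l \<in> {1..w}" for l
    unfolding cube_def using that prob_space_lebesgue_on_unit_interval
    by (intro AE_PiM_component) auto
  then show ?thesis by (intro eventually_ball_finite) auto
qed

lemma integral_unit_interval_power:
  "integral\<^sup>L (lebesgue_on {0..1}) (\<lambda>t::real. t ^ p) = 1 / real (Suc p)"
proof -
  have "((\<lambda>t. t ^ Suc p / real (Suc p)) has_real_derivative t ^ p) (at t within {0..1})" for t :: real
    using DERIV_cdivide[OF DERIV_pow[of "Suc p" t], of "real (Suc p)"]
    by (simp add: has_field_derivative_at_within del: of_nat_Suc)
  then have "((\<lambda>t::real. t ^ p) has_integral (1 / real (Suc p))) {0..1}"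
    using fundamental_theorem_of_calculus[of 0 1 "\<lambda>t. t ^ Suc p / real (Suc p)" "\<lambda>t. t ^ p"]
    by (simp add: has_real_derivative_iff_has_vector_derivative del: of_nat_Suc)
  then show ?thesis
    by (simp add: lebesgue_integral_eq_integral continuous_imp_integrable_real continuous_intros
        integral_unique del: of_nat_Suc)
qed

lemma cube_integral_monomial:
  fixes c :: "nat \<Rightarrow> 'a::{real_normed_field, banach, second_countable_topology}"
  shows "integrable (cube w) (\<lambda>u. \<Prod>l=1..w. c l * of_real (u l ^ p l))"
    and "integral\<^sup>L (cube w) (\<lambda>u. \<Prod>l=1..w. c l * of_real (u l ^ p l))
           = (\<Prod>l=1..w. c l / of_nat (Suc (p l)))"
proof -
  interpret product_sigma_finite "\<lambda>_. lebesgue_on {0..1::real}"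
    using prob_space_lebesgue_on_unit_interval
    by (simp add: product_sigma_finite_def prob_space_imp_sigma_finite)
  have int: "integrable (lebesgue_on {0..1}) (\<lambda>t::real. t ^ k)" for k
    by (intro continuous_imp_integrable_real continuous_intros)
  have int_c: "integrable (lebesgue_on {0..1}) (\<lambda>t. c l * of_real (t ^ p l))" for l
    using int by (intro integrable_mult_right integrable_of_real)
  show "integrable (cube w) (\<lambda>u. \<Prod>l=1..w. c l * of_real (u l ^ p l))"
    unfolding cube_def by (rule product_integrable_prod[OF finite_atLeastAtMost int_c])
  have "integral\<^sup>L (cube w) (\<lambda>u. \<Prod>l=1..w. c l * of_real (u l ^ p l))
      = (\<Prod>l=1..w. integral\<^sup>L (lebesgue_on {0..1}) (\<lambda>t. c l * of_real (t ^ p l)))"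
    unfolding cube_def by (rule product_integral_prod[OF finite_atLeastAtMost int_c])
  also have "\<dots> = (\<Prod>l=1..w. c l / of_nat (Suc (p l)))"
    by (simp add: integral_of_real[OF int] integral_unit_interval_power divide_inverse
        del: of_nat_Suc of_real_power)
  finally show "integral\<^sup>L (cube w) (\<lambda>u. \<Prod>l=1..w. c l * of_real (u l ^ p l))
      = (\<Prod>l=1..w. c l / of_nat (Suc (p l)))" .
qed

lemma cube_integral_norm_monomial:
  fixes c :: "nat \<Rightarrow> 'a::{real_normed_field, banach, second_countable_topology}"
  shows "(\<integral>u. norm (\<Prod>l=1..w. c l * of_real (u l ^ p l)) \<partial>cube w)
           = (\<Prod>l=1..w. norm (c l) / real (Suc (p l)))"
proof -
  have "(\<integral>u. norm (\<Prod>l=1..w. c l * of_real (u l ^ p l)) \<partial>cube w)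
      = (\<integral>u. (\<Prod>l=1..w. norm (c l) * u l ^ p l) \<partial>cube w)"
    by (intro Bochner_Integration.integral_cong refl)
      (auto simp: space_cube PiE_iff norm_mult norm_power simp flip: prod_norm intro!: prod.cong)
  also have "\<dots> = (\<Prod>l=1..w. norm (c l) / real (Suc (p l)))"
    using cube_integral_monomial(2)[where c = "\<lambda>l. norm (c l)"] by simp
  finally show ?thesis .
qed

section \<open>Blocks and index tuples\<close>

lemma Nw_0 [simp]: "Nw n 0 = 0"
  by (simp add: Nw_def)

lemma Nw_Suc: "Nw n (Suc k) = Nw n k + n (Suc k)"
  by (simp add: Nw_def)

lemma Nw_mono: "i \<le> j \<Longrightarrow> Nw n i \<le> Nw n j"
  unfolding Nw_def by (intro sum_mono2) auto

lemma Nw_strict_mono: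
  assumes "\<forall>i\<in>{1..m}. n i > 0" and "i < j" and "j \<le> m"
  shows "Nw n i < Nw n j"
proof -
  have "Nw n i \<le> Nw n (j - 1)" using assms(2) by (intro Nw_mono) auto
  also have "\<dots> < Nw n j" using assms Nw_Suc[of n "j - 1"] by (cases j) auto
  finally show ?thesis .
qed

lemma Nw_inj:
  assumes "\<forall>i\<in>{1..m}. n i > 0" and "i \<le> m" "j \<le> m" "Nw n i = Nw n j"
  shows "i = j"
  using Nw_strict_mono[OF assms(1), of i j] Nw_strict_mono[OF assms(1), of j i] assms(2-4)
  by (cases i j rule: linorder_cases) auto

lemma prod_Nw_blocks:
  "(\<Prod>l\<in>{1..Nw n m}. F l) = (\<Prod>i\<in>{1..m}. \<Prod>l\<in>{Nw n (i - 1)<..Nw n i}. F l)"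
proof (induction m)
  case (Suc m)
  have "{1..Nw n (Suc m)} = {1..Nw n m} \<union> {Nw n m<..Nw n (Suc m)}"
    using Nw_mono[of m "Suc m" n] by auto
  then show ?case
    using Suc by (simp add: prod.union_disjoint ivl_disj_int)
qed simp

definition block_start :: "(nat \<Rightarrow> nat) \<Rightarrow> nat \<Rightarrow> nat" where
  "block_start n k = Suc (Nw n (k - 1))"

lemma block_start_le_Nw:
  assumes "\<forall>i\<in>{1..m}. n i > 0" and "k \<in> {1..m}"
  shows "block_start n k \<le> Nw n k"
  using Nw_strict_mono[OF assms(1), of "k - 1" k] assms(2) by (simp add: block_start_def)

lemma block_starts_eq_image:
  assumes "\<forall>i\<in>{1..m}. n i > 0"
  shows "{j \<in> {1..Nw n m}. \<exists>k\<in>{0..<m}. j = Nw n k + 1} = block_start n ` {1..m}"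
proof (intro equalityI subsetI)
  fix j
  assume "j \<in> {j \<in> {1..Nw n m}. \<exists>k\<in>{0..<m}. j = Nw n k + 1}"
  then obtain k where "k < m" "j = block_start n (Suc k)" by (auto simp: block_start_def)
  then show "j \<in> block_start n ` {1..m}" by force
next
  fix j
  assume "j \<in> block_start n ` {1..m}"
  then obtain k where k: "k \<in> {1..m}" "j = block_start n k" by auto
  then have "j \<le> Nw n m" using block_start_le_Nw[OF assms k(1)] Nw_mono[of k m n] by simp
  with k show "j \<in> {j \<in> {1..Nw n m}. \<exists>k\<in>{0..<m}. j = Nw n k + 1}"
    by (auto simp: block_start_def intro!: bexI[of _ "k - 1"])
qed

lemma inj_on_block_start:
  assumes "\<forall>i\<in>{1..m}. n i > 0"
  shows "inj_on (block_start n) {1..m}"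
proof
  fix a b
  assume "a \<in> {1..m}" "b \<in> {1..m}" "block_start n a = block_start n b"
  then have "a - 1 \<le> m" "b - 1 \<le> m" "Nw n (a - 1) = Nw n (b - 1)"
    by (auto simp: block_start_def)
  then have "a - 1 = b - 1" by (rule Nw_inj[OF assms])
  with \<open>a \<in> {1..m}\<close> \<open>b \<in> {1..m}\<close> show "a = b" by auto
qed

definition vcoord_scale :: "nat \<Rightarrow> (nat \<Rightarrow> nat) \<Rightarrow> (nat \<Rightarrow> complex) \<Rightarrow> nat \<Rightarrow> complex" where
  "vcoord_scale m n x l =
     (if \<exists>k\<in>{1..m}. l = Nw n k then x (THE k. k \<in> {1..m} \<and> l = Nw n k) else 1)"

lemma vcoord_eq: "vcoord m n x u l = vcoord_scale m n x l * complex_of_real (u l)"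
  by (simp add: vcoord_def vcoord_scale_def)

lemma vcoord_scale_Nw:
  assumes "\<forall>i\<in>{1..m}. n i > 0" and "i \<in> {1..m}"
  shows "vcoord_scale m n x (Nw n i) = x i"
proof -
  have "(THE k. k \<in> {1..m} \<and> Nw n i = Nw n k) = i"
    using assms Nw_inj[OF assms(1)] by (intro the_equality) auto
  then show ?thesis using assms(2) by (auto simp: vcoord_scale_def)
qed

lemma vcoord_scale_block:
  assumes pos: "\<forall>i\<in>{1..m}. n i > 0" and i: "i \<in> {1..m}" and l: "l \<in> {Nw n (i - 1)<..Nw n i}"
  shows "vcoord_scale m n x l = (if l = Nw n i then x i else 1)"
proof (cases "l = Nw n i")
  case True
  then show ?thesis using vcoord_scale_Nw[OF pos i] by simp
next
  case False
  have "l \<noteq> Nw n k" if "k \<in> {1..m}" for k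
  proof (cases k i rule: linorder_cases)
    case less
    then have "Nw n k \<le> Nw n (i - 1)" by (intro Nw_mono) simp
    then show ?thesis using l by auto
  next
    case greater
    then show ?thesis using l that Nw_strict_mono[OF pos greater] by auto
  qed (use False in simp)
  then show ?thesis using False by (auto simp: vcoord_scale_def)
qed

lemma norm_vcoord_scale_le_1:
  assumes "\<forall>i\<in>{1..m}. n i > 0" and "\<forall>i\<in>{1..m}. norm (x i) < 1"
  shows "norm (vcoord_scale m n x l) \<le> 1"
proof (cases "\<exists>k\<in>{1..m}. l = Nw n k")
  case True
  then obtain k where "k \<in> {1..m}" "l = Nw n k" by blast
  then show ?thesis using vcoord_scale_Nw[OF assms(1)] assms(2) by (simp add: less_imp_le)
next
  case False
  then show ?thesis by (simp add: vcoord_scale_def)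
qed

definition pos_tuples :: "nat \<Rightarrow> (nat \<Rightarrow> nat) set" where
  "pos_tuples m = PiE {1..m} (\<lambda>_. {1..})"

lemma countable_pos_tuples: "countable (pos_tuples m)"
  unfolding pos_tuples_def by (intro countable_PiE) auto

lemma infinite_pos_tuples:
  assumes "m \<ge> 1"
  shows "infinite (pos_tuples m)"
proof
  assume "finite (pos_tuples m)"
  moreover have "{1..} \<subseteq> (\<lambda>d. d 1) ` pos_tuples m"
  proof
    fix j :: nat
    assume "j \<in> {1..}"
    then have "restrict (\<lambda>_. j) {1..m} \<in> pos_tuples m" by (auto simp: pos_tuples_def)
    then show "j \<in> (\<lambda>d. d 1) ` pos_tuples m" using assms by (auto intro: rev_image_eqI)
  qed
  ultimately have "finite {1::nat..}" by (rule finite_surj)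
  then show False by (simp add: infinite_Ici)
qed

definition Li_index :: "nat \<Rightarrow> (nat \<Rightarrow> nat) set" where
  "Li_index m = {k :: nat \<Rightarrow> nat. (\<forall>i. i \<notin> {1..m} \<longrightarrow> k i = 0) \<and> (\<forall>i\<in>{1..m}. 0 < k i)
     \<and> (\<forall>i\<in>{1..<m}. k i < k (Suc i))}"

definition Li_term :: "nat \<Rightarrow> (nat \<Rightarrow> nat) \<Rightarrow> (nat \<Rightarrow> complex) \<Rightarrow> (nat \<Rightarrow> nat) \<Rightarrow> complex" where
  "Li_term m n x k = (\<Prod>i=1..m. x i ^ k i / of_nat (k i) ^ n i)"

lemma Li_eq_infsum: "Li m n x = infsum (Li_term m n x) (Li_index m)"
  by (simp add: Li_def Li_term_def[abs_def] Li_index_def)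

definition partial_sums :: "nat \<Rightarrow> (nat \<Rightarrow> nat) \<Rightarrow> nat \<Rightarrow> nat" where
  "partial_sums m d = (\<lambda>i. if i \<in> {1..m} then (\<Sum>k=1..i. d k) else 0)"

definition differences :: "nat \<Rightarrow> (nat \<Rightarrow> nat) \<Rightarrow> nat \<Rightarrow> nat" where
  "differences m k = restrict (\<lambda>i. k i - k (i - 1)) {1..m}"

lemma partial_sums_in_Li_index: "d \<in> pos_tuples m \<Longrightarrow> partial_sums m d \<in> Li_index m"
proof -
  assume d: "d \<in> pos_tuples m"
  have pos: "d i \<ge> 1" if "i \<in> {1..m}" for i using d that by (auto simp: pos_tuples_def)
  have "0 < (\<Sum>k=1..i. d k)" if "i \<in> {1..m}" for i
    using pos[OF that] member_le_sum[of i "{1..i}" d] that by auto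
  moreover have "(\<Sum>k=1..i. d k) < (\<Sum>k=1..Suc i. d k)" if "i \<in> {1..<m}" for i
    using pos[of "Suc i"] that by simp
  ultimately show ?thesis unfolding Li_index_def partial_sums_def by auto
qed

lemma differences_in_pos_tuples: "k \<in> Li_index m \<Longrightarrow> differences m k \<in> pos_tuples m"
proof -
  assume k: "k \<in> Li_index m"
  have "k (i - 1) < k i" if "i \<in> {1..m}" for i
  proof (cases "i = 1")
    case True
    then show ?thesis using k that by (auto simp: Li_index_def)
  next
    case False
    then have "i - 1 \<in> {1..<m}" using that by auto
    then have "k (i - 1) < k (Suc (i - 1))" using k unfolding Li_index_def by blast
    then show ?thesis using that by simp
  qed
  then show ?thesis unfolding differences_def pos_tuples_def by fastforce
qed

lemma partial_sums_differences: "k \<in> Li_index m \<Longrightarrow> partial_sums m (differences m k) = k"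
proof
  fix i
  assume k: "k \<in> Li_index m"
  have step: "k j \<le> k (Suc j)" if "j < m" for j
    using k that by (cases j) (auto simp: Li_index_def less_imp_le)
  have "(\<Sum>j=1..i. k j - k (j - 1)) = k i" if "i \<le> m" for i
    using that
  proof (induction i)
    case 0
    then show ?case using k by (simp add: Li_index_def)
  next
    case (Suc i)
    then show ?case using step[of i] by simp
  qed
  moreover have "(\<Sum>j=1..i. differences m k j) = (\<Sum>j=1..i. k j - k (j - 1))" if "i \<le> m" for i
    using that by (intro sum.cong) (auto simp: differences_def)
  ultimately show "partial_sums m (differences m k) i = k i"
    using k by (auto simp: partial_sums_def Li_index_def)
qed

lemma differences_partial_sums: "d \<in> pos_tuples m \<Longrightarrow> differences m (partial_sums m d) = d"
proof
  fix i
  assume d: "d \<in> pos_tuples m"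
  show "differences m (partial_sums m d) i = d i"
  proof (cases "i \<in> {1..m}")
    case True
    moreover have "(\<Sum>k=1..i. d k) = (\<Sum>k=1..i - 1. d k) + d i"
      using True by (cases i) auto
    ultimately show ?thesis by (auto simp: differences_def partial_sums_def)
  next
    case False
    then show ?thesis using d by (auto simp: differences_def pos_tuples_def PiE_iff extensional_def)
  qed
qed

lemma infsum_Li_index_eq_infsum_pos_tuples:
  "infsum h (Li_index m) = (\<Sum>\<^sub>\<infinity>d\<in>pos_tuples m. h (partial_sums m d))"
  by (rule infsum_reindex_bij_witness[where i = "partial_sums m" and j = "differences m"])
    (auto simp: partial_sums_differences differences_in_pos_tuples differences_partial_sums
      partial_sums_in_Li_index)

section \<open>The pulled-back form\<close>

lemma Pprod_fun_upd:
  "Pprod m n x (u(i := t)) j =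
    (if i \<in> {j..Nw n m}
     then vcoord_scale m n x i * complex_of_real t * (\<Prod>l\<in>{j..Nw n m} - {i}. vcoord m n x u l)
     else Pprod m n x u j)"
proof (cases "i \<in> {j..Nw n m}")
  case True
  then have "Pprod m n x (u(i := t)) j
      = vcoord m n x (u(i := t)) i * (\<Prod>l\<in>{j..Nw n m} - {i}. vcoord m n x (u(i := t)) l)"
    unfolding Pprod_def by (simp add: prod.remove)
  also have "(\<Prod>l\<in>{j..Nw n m} - {i}. vcoord m n x (u(i := t)) l) = (\<Prod>l\<in>{j..Nw n m} - {i}. vcoord m n x u l)"
    by (rule prod.cong) (auto simp: vcoord_eq)
  also have "vcoord m n x (u(i := t)) i = vcoord_scale m n x i * complex_of_real t"
    by (simp add: vcoord_eq)
  finally show ?thesis using True by (simp only: if_True)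
next
  case False
  then show ?thesis unfolding Pprod_def by (auto intro!: prod.cong simp: vcoord_eq)
qed

lemma Pprod_partial_derivative:
  "vector_derivative (\<lambda>t. Pprod m n x (u(i := t)) j) (at (u i)) =
    (if i \<in> {j..Nw n m} then vcoord_scale m n x i * (\<Prod>l\<in>{j..Nw n m} - {i}. vcoord m n x u l) else 0)"
proof (cases "i \<in> {j..Nw n m}")
  case True
  define c where "c = vcoord_scale m n x i * (\<Prod>l\<in>{j..Nw n m} - {i}. vcoord m n x u l)"
  have "((\<lambda>t. t *\<^sub>R c) has_vector_derivative c) (at (u i))"
    by (auto intro!: derivative_eq_intros)
  then have "((\<lambda>t. Pprod m n x (u(i := t)) j) has_vector_derivative c) (at (u i))"
    using True by (simp add: Pprod_fun_upd c_def scaleR_conv_of_real mult_ac)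
  then show ?thesis using True by (simp add: vector_derivative_at c_def)
next
  case False
  then have "(\<lambda>t. Pprod m n x (u(i := t)) j) = (\<lambda>t. Pprod m n x u j)"
    by (simp only: Pprod_fun_upd if_not_P if_False)
  then show ?thesis unfolding if_not_P[OF False] by simp
qed

definition eta_factor :: "nat \<Rightarrow> (nat \<Rightarrow> nat) \<Rightarrow> (nat \<Rightarrow> complex) \<Rightarrow> (nat \<Rightarrow> real) \<Rightarrow> nat \<Rightarrow> complex" where
  "eta_factor m n x u j =
     (if \<exists>k\<in>{0..<m}. j = Nw n k + 1 then 1 / (1 - Pprod m n x u j) else 1 / Pprod m n x u j)"

lemma Omega_coeff_eq_diagonal:
  "Omega_coeff m n x u =
     (\<Prod>j=1..Nw n m. eta_factor m n x u j * (vcoord_scale m n x j * (\<Prod>l\<in>{Suc j..Nw n m}. vcoord m n x u l)))"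
proof -
  have eta: "eta_coeff m n x u j i = eta_factor m n x u j *
      (if i \<in> {j..Nw n m} then vcoord_scale m n x i * (\<Prod>l\<in>{j..Nw n m} - {i}. vcoord m n x u l) else 0)"
    for i j
    by (simp add: eta_coeff_def eta_factor_def Pprod_partial_derivative)
  have "Omega_coeff m n x u = (\<Prod>j=1..Nw n m. eta_coeff m n x u j j)"
    unfolding Omega_coeff_def by (rule leibniz_sum_upper_triangular) (auto simp: eta)
  also have "\<dots> = (\<Prod>j=1..Nw n m. eta_factor m n x u j *
      (vcoord_scale m n x j * (\<Prod>l\<in>{Suc j..Nw n m}. vcoord m n x u l)))"
  proof (intro prod.cong refl)
    fix j
    assume "j \<in> {1..Nw n m}"
    moreover have "{j..Nw n m} - {j} = {Suc j..Nw n m}" by auto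
    ultimately show "eta_coeff m n x u j j = eta_factor m n x u j *
        (vcoord_scale m n x j * (\<Prod>l\<in>{Suc j..Nw n m}. vcoord m n x u l))"
      by (simp add: eta)
  qed
  finally show ?thesis .
qed

lemma Omega_coeff_measurable: "Omega_coeff m n x \<in> borel_measurable (cube (Nw n m))"
proof -
  have coord: "(\<lambda>u. complex_of_real (u l)) \<in> borel_measurable (cube (Nw n m))" if "l \<in> {1..Nw n m}" for l
    unfolding cube_def
    by (rule measurable_compose[OF measurable_component_singleton[OF that]])
      (intro continuous_imp_measurable_on_sets_lebesgue continuous_intros; simp)
  have vcoord: "(\<lambda>u. vcoord m n x u l) \<in> borel_measurable (cube (Nw n m))" if "l \<in> {1..Nw n m}" for l
    unfolding vcoord_eq using coord[OF that] by measurable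
  have Pprod: "(\<lambda>u. Pprod m n x u j) \<in> borel_measurable (cube (Nw n m))" if "j \<ge> 1" for j
    unfolding Pprod_def using that by (intro borel_measurable_prod vcoord) auto
  have "(\<lambda>u. eta_factor m n x u j) \<in> borel_measurable (cube (Nw n m))" if "j \<ge> 1" for j
    unfolding eta_factor_def using Pprod[OF that] by measurable
  then show ?thesis
    unfolding Omega_coeff_eq_diagonal[abs_def]
    by (intro borel_measurable_prod borel_measurable_times borel_measurable_const vcoord) auto
qed

(* With 1 / 0 = 0 this also holds when some x_k vanishes: then P_1 = 0 and both sides are 0. *)
lemma prod_eta_factor_mult_Pprod:
  assumes "m \<ge> 1" and pos: "\<forall>i\<in>{1..m}. n i > 0"
  shows "(\<Prod>j=1..Nw n m. eta_factor m n x u j * Pprod m n x u j)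
      = (\<Prod>k=1..m. Pprod m n x u (block_start n k) / (1 - Pprod m n x u (block_start n k)))"
  (is "(\<Prod>j=1..Nw n m. eta_factor m n x u j * ?P j) = _")
proof (cases "?P 1 = 0")
  case True
  have "Nw n 0 < Nw n m" using assms by (intro Nw_strict_mono) auto
  then have "(\<Prod>j=1..Nw n m. eta_factor m n x u j * ?P j) = 0"
    using True by (intro prod_zero) auto
  moreover have "(\<Prod>k=1..m. ?P (block_start n k) / (1 - ?P (block_start n k))) = 0"
    using True assms(1) by (intro prod_zero bexI[of _ 1]) (auto simp: block_start_def)
  ultimately show ?thesis by (simp only:)
next
  case False
  have "?P j \<noteq> 0" if "j \<ge> 1" for j
    using False that by (auto simp: Pprod_def prod_zero_iff)
  then have "eta_factor m n x u j * ?P j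
      = (if \<exists>k\<in>{0..<m}. j = Nw n k + 1 then ?P j / (1 - ?P j) else 1)" if "j \<in> {1..Nw n m}" for j
    using that by (simp add: eta_factor_def)
  then have "(\<Prod>j=1..Nw n m. eta_factor m n x u j * ?P j)
      = (\<Prod>j=1..Nw n m. if \<exists>k\<in>{0..<m}. j = Nw n k + 1 then ?P j / (1 - ?P j) else 1)"
    by (rule prod.cong[OF refl])
  also have "\<dots> = (\<Prod>j\<in>{j \<in> {1..Nw n m}. \<exists>k\<in>{0..<m}. j = Nw n k + 1}. ?P j / (1 - ?P j))"
    by (rule prod.inter_filter[symmetric]) simp
  also have "\<dots> = (\<Prod>k=1..m. ?P (block_start n k) / (1 - ?P (block_start n k)))"
    unfolding block_starts_eq_image[OF pos] by (rule prod.reindex[OF inj_on_block_start[OF pos], unfolded comp_def])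
  finally show ?thesis .
qed

lemma Omega_coeff_closed_form:
  assumes "m \<ge> 1" and "\<forall>i\<in>{1..m}. n i > 0" and u: "\<forall>l\<in>{1..Nw n m}. u l \<noteq> 0"
  shows "Omega_coeff m n x u =
    (\<Prod>k=1..m. Pprod m n x u (block_start n k) / (1 - Pprod m n x u (block_start n k)))
      / (\<Prod>l=1..Nw n m. complex_of_real (u l))"
proof -
  have "vcoord_scale m n x j * (\<Prod>l\<in>{Suc j..Nw n m}. vcoord m n x u l)
      = Pprod m n x u j / complex_of_real (u j)" if "j \<in> {1..Nw n m}" for j
  proof -
    have "{j..Nw n m} = insert j {Suc j..Nw n m}" using that by auto
    then show ?thesis using u that by (simp add: Pprod_def vcoord_eq)
  qed
  then have "Omega_coeff m n x u
      = (\<Prod>j=1..Nw n m. eta_factor m n x u j * Pprod m n x u j / complex_of_real (u j))"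
    unfolding Omega_coeff_eq_diagonal by (intro prod.cong) auto
  then show ?thesis
    by (simp only: prod_dividef prod_eta_factor_mult_Pprod[OF assms(1,2)])
qed

lemma norm_Pprod_block_start_less_1:
  assumes pos: "\<forall>i\<in>{1..m}. n i > 0" and x: "\<forall>i\<in>{1..m}. norm (x i) < 1" and k: "k \<in> {1..m}"
    and u: "\<forall>l\<in>{1..Nw n m}. \<bar>u l\<bar> \<le> 1"
  shows "norm (Pprod m n x u (block_start n k)) < 1"
proof -
  have vcoord_le_1: "norm (vcoord m n x u l) \<le> 1" if "l \<in> {1..Nw n m}" for l
    using u that norm_vcoord_scale_le_1[OF pos x, of l] by (simp add: vcoord_eq norm_mult mult_le_one)
  have Nw_k: "Nw n k \<in> {block_start n k..Nw n m}"
    using block_start_le_Nw[OF pos k] Nw_mono[of k m n] k by simp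
  moreover have "{block_start n k..Nw n m} \<subseteq> {1..Nw n m}" by (auto simp: block_start_def)
  ultimately have "norm (Pprod m n x u (block_start n k)) \<le> norm (vcoord m n x u (Nw n k))"
    unfolding Pprod_def prod_norm[symmetric] using vcoord_le_1 by (intro prod_le_factor) auto
  also have "\<dots> = norm (x k) * \<bar>u (Nw n k)\<bar>"
    by (simp add: vcoord_eq vcoord_scale_Nw[OF pos k] norm_mult)
  also have "\<dots> \<le> norm (x k)"
  proof (rule mult_left_le)
    show "\<bar>u (Nw n k)\<bar> \<le> 1" using u Nw_k by (simp add: block_start_def)
  qed simp
  also have "\<dots> < 1" using x k by simp
  finally show ?thesis .
qed

section \<open>Series expansion of the form\<close>

(* The exponent of v_l in prod_k P_(s_k)^(d_k). *)
definition monomial_exponent :: "nat \<Rightarrow> (nat \<Rightarrow> nat) \<Rightarrow> (nat \<Rightarrow> nat) \<Rightarrow> nat \<Rightarrow> nat" where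
  "monomial_exponent m n d l = (\<Sum>k=1..m. if block_start n k \<le> l then d k else 0)"

lemma monomial_exponent_block:
  assumes i: "i \<in> {1..m}" and l: "l \<in> {Nw n (i - 1)<..Nw n i}"
  shows "monomial_exponent m n d l = (\<Sum>k=1..i. d k)"
proof -
  have "block_start n k \<le> l \<longleftrightarrow> k \<le> i" for k
  proof (cases "k \<le> i")
    case True
    then have "Nw n (k - 1) \<le> Nw n (i - 1)" by (intro Nw_mono) simp
    then show ?thesis using l True by (simp add: block_start_def)
  next
    case False
    then have "Nw n i \<le> Nw n (k - 1)" by (intro Nw_mono) simp
    then show ?thesis using l False by (simp add: block_start_def)
  qed
  then have "monomial_exponent m n d l = (\<Sum>k\<in>{1..m}. if k \<le> i then d k else 0)"
    unfolding monomial_exponent_def by (intro sum.cong) auto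
  also have "\<dots> = (\<Sum>k\<in>{k\<in>{1..m}. k \<le> i}. d k)"
    by (rule sum.inter_filter[symmetric]) simp
  also have "{k\<in>{1..m}. k \<le> i} = {1..i}" using i by auto
  finally show ?thesis .
qed

lemma monomial_exponent_pos:
  assumes "d \<in> pos_tuples m" and "m \<ge> 1" and "l \<ge> 1"
  shows "monomial_exponent m n d l \<ge> 1"
proof -
  have "1 \<le> d 1" using assms(1,2) by (auto simp: pos_tuples_def)
  also have "\<dots> = (if block_start n 1 \<le> l then d 1 else 0)"
    using assms(3) by (simp add: block_start_def)
  also have "\<dots> \<le> monomial_exponent m n d l"
    unfolding monomial_exponent_def using assms(2)
    by (intro member_le_sum[of 1 "{1..m}" "\<lambda>k. if block_start n k \<le> l then d k else 0"]) auto
  finally show ?thesis .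
qed

(* The term of index d of the geometric expansion of Omega. *)
definition Omega_monomial ::
  "nat \<Rightarrow> (nat \<Rightarrow> nat) \<Rightarrow> (nat \<Rightarrow> complex) \<Rightarrow> (nat \<Rightarrow> nat) \<Rightarrow> (nat \<Rightarrow> real) \<Rightarrow> complex" where
  "Omega_monomial m n x d u = (\<Prod>l=1..Nw n m.
     vcoord_scale m n x l ^ monomial_exponent m n d l * complex_of_real (u l ^ (monomial_exponent m n d l - 1)))"

lemma prod_Pprod_block_start_power:
  "(\<Prod>k=1..m. Pprod m n x u (block_start n k) ^ d k)
     = (\<Prod>l=1..Nw n m. vcoord m n x u l ^ monomial_exponent m n d l)"
proof -
  have "(\<Prod>k=1..m. Pprod m n x u (block_start n k) ^ d k) = (\<Prod>l=1..Nw n m.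
      vcoord m n x u l ^ (\<Sum>k=1..m. if l \<in> {block_start n k..Nw n m} then d k else 0))"
    unfolding Pprod_def by (rule prod_power_prod) (auto simp: block_start_def)
  also have "\<dots> = (\<Prod>l=1..Nw n m. vcoord m n x u l ^ monomial_exponent m n d l)"
    by (intro prod.cong refl) (simp add: monomial_exponent_def)
  finally show ?thesis .
qed

lemma Omega_monomial_eq:
  assumes "m \<ge> 1" and d: "d \<in> pos_tuples m" and u: "\<forall>l\<in>{1..Nw n m}. u l \<noteq> 0"
  shows "Omega_monomial m n x d u =
    (\<Prod>k=1..m. Pprod m n x u (block_start n k) ^ d k) / (\<Prod>l=1..Nw n m. complex_of_real (u l))"
proof -
  have "vcoord m n x u l ^ monomial_exponent m n d l / complex_of_real (u l)
      = vcoord_scale m n x l ^ monomial_exponent m n d l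
        * complex_of_real (u l ^ (monomial_exponent m n d l - 1))" if l: "l \<in> {1..Nw n m}" for l
  proof -
    obtain e where e: "monomial_exponent m n d l = Suc e"
      using monomial_exponent_pos[OF d assms(1), of l n] l by (cases "monomial_exponent m n d l") auto
    have "u l \<noteq> 0" using u l by blast
    then show ?thesis by (simp add: e vcoord_eq power_mult_distrib)
  qed
  then show ?thesis
    unfolding Omega_monomial_def prod_Pprod_block_start_power prod_dividef[symmetric]
    by (intro prod.cong) auto
qed

lemma Omega_coeff_has_sum:
  assumes "m \<ge> 1" and pos: "\<forall>i\<in>{1..m}. n i > 0" and x: "\<forall>i\<in>{1..m}. norm (x i) < 1"
    and u: "\<forall>l\<in>{1..Nw n m}. 0 < u l \<and> u l \<le> 1"
  shows "((\<lambda>d. Omega_monomial m n x d u) has_sum Omega_coeff m n x u) (pos_tuples m)"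
proof -
  let ?P = "\<lambda>k. Pprod m n x u (block_start n k)"
  let ?U = "\<Prod>l=1..Nw n m. complex_of_real (u l)"
  have "norm (?P k) < 1" if "k \<in> {1..m}" for k
    using u by (intro norm_Pprod_block_start_less_1[OF pos x that]) auto
  then have "((\<lambda>d. (\<Prod>k=1..m. ?P k ^ d k) * inverse ?U)
      has_sum (\<Prod>k=1..m. ?P k / (1 - ?P k)) * inverse ?U) (pos_tuples m)"
    unfolding pos_tuples_def by (intro has_sum_cmult_left has_sum_prod_geometric_PiE) auto
  moreover have "Omega_coeff m n x u = (\<Prod>k=1..m. ?P k / (1 - ?P k)) / ?U"
    using u by (intro Omega_coeff_closed_form assms(1) pos) auto
  moreover have "Omega_monomial m n x d u = (\<Prod>k=1..m. ?P k ^ d k) / ?U" if "d \<in> pos_tuples m" for d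
    using that u by (intro Omega_monomial_eq assms(1)) auto
  ultimately show ?thesis
    using has_sum_cong[of "pos_tuples m" "\<lambda>d. Omega_monomial m n x d u"] by (simp add: divide_inverse)
qed

lemma integral_Omega_monomial:
  assumes "m \<ge> 1" and d: "d \<in> pos_tuples m"
  shows "integrable (cube (Nw n m)) (Omega_monomial m n x d)"
    and "integral\<^sup>L (cube (Nw n m)) (Omega_monomial m n x d) = (\<Prod>l=1..Nw n m.
           vcoord_scale m n x l ^ monomial_exponent m n d l / of_nat (monomial_exponent m n d l))"
    and "(\<integral>u. norm (Omega_monomial m n x d u) \<partial>cube (Nw n m)) = (\<Prod>l=1..Nw n m.
           norm (vcoord_scale m n x l) ^ monomial_exponent m n d l / real (monomial_exponent m n d l))"
proof -
  have E: "Suc (monomial_exponent m n d l - 1) = monomial_exponent m n d l" if "l \<in> {1..Nw n m}" for l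
    using monomial_exponent_pos[OF d assms(1), of l n] that by simp
  show "integrable (cube (Nw n m)) (Omega_monomial m n x d)"
    unfolding Omega_monomial_def[abs_def] by (rule cube_integral_monomial(1))
  show "integral\<^sup>L (cube (Nw n m)) (Omega_monomial m n x d) = (\<Prod>l=1..Nw n m.
      vcoord_scale m n x l ^ monomial_exponent m n d l / of_nat (monomial_exponent m n d l))"
    unfolding Omega_monomial_def[abs_def] cube_integral_monomial(2)
    by (intro prod.cong refl) (simp only: E)
  show "(\<integral>u. norm (Omega_monomial m n x d u) \<partial>cube (Nw n m)) = (\<Prod>l=1..Nw n m.
      norm (vcoord_scale m n x l) ^ monomial_exponent m n d l / real (monomial_exponent m n d l))"
    unfolding Omega_monomial_def cube_integral_norm_monomial
    by (intro prod.cong refl) (simp only: E norm_power)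
qed

lemma integral_Omega_monomial_eq_Li_term:
  assumes "m \<ge> 1" and pos: "\<forall>i\<in>{1..m}. n i > 0" and d: "d \<in> pos_tuples m"
  shows "integral\<^sup>L (cube (Nw n m)) (Omega_monomial m n x d) = Li_term m n x (partial_sums m d)"
proof -
  have "integral\<^sup>L (cube (Nw n m)) (Omega_monomial m n x d) = (\<Prod>i=1..m. \<Prod>l\<in>{Nw n (i - 1)<..Nw n i}.
      vcoord_scale m n x l ^ monomial_exponent m n d l / of_nat (monomial_exponent m n d l))"
    by (simp only: integral_Omega_monomial(2)[OF assms(1) d] prod_Nw_blocks)
  also have "\<dots> = Li_term m n x (partial_sums m d)"
    unfolding Li_term_def
  proof (rule prod.cong[OF refl])
    fix i
    assume i: "i \<in> {1..m}"
    let ?K = "partial_sums m d i"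
    have "(\<Prod>l\<in>{Nw n (i - 1)<..Nw n i}.
        vcoord_scale m n x l ^ monomial_exponent m n d l / of_nat (monomial_exponent m n d l))
        = (\<Prod>l\<in>{Nw n (i - 1)<..Nw n i}. (if l = Nw n i then x i ^ ?K else 1) / of_nat ?K)"
      using i by (intro prod.cong refl)
        (simp add: vcoord_scale_block[OF pos i] monomial_exponent_block[OF i] partial_sums_def)
    also have "\<dots> = x i ^ ?K / of_nat ?K ^ n i"
      using Nw_strict_mono[OF pos, of "i - 1" i] Nw_Suc[of n "i - 1"] i
      by (simp add: prod_dividef prod.delta)
    finally show "(\<Prod>l\<in>{Nw n (i - 1)<..Nw n i}.
        vcoord_scale m n x l ^ monomial_exponent m n d l / of_nat (monomial_exponent m n d l))
        = x i ^ ?K / of_nat ?K ^ n i" .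
  qed
  finally show ?thesis .
qed

lemma summable_on_integral_norm_Omega_monomial:
  assumes "m \<ge> 1" and pos: "\<forall>i\<in>{1..m}. n i > 0" and x: "\<forall>i\<in>{1..m}. norm (x i) < 1"
  shows "(\<lambda>d. \<integral>u. norm (Omega_monomial m n x d u) \<partial>cube (Nw n m)) summable_on pos_tuples m"
proof -
  \<comment> \<open>the expansion at u = 1 dominates the integrals of the norms\<close>
  define q where "q k = norm (Pprod m n x (\<lambda>_. 1) (block_start n k))" for k
  have "q k < 1" if "k \<in> {1..m}" for k
    unfolding q_def by (rule norm_Pprod_block_start_less_1[OF pos x that]) simp
  then have "((\<lambda>d. \<Prod>k=1..m. q k ^ d k) has_sum (\<Prod>k=1..m. q k / (1 - q k))) (pos_tuples m)"
    unfolding pos_tuples_def by (intro has_sum_prod_geometric_PiE) (auto simp: q_def)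
  then have summable: "(\<lambda>d. \<Prod>k=1..m. q k ^ d k) summable_on pos_tuples m"
    by (auto simp: summable_on_def)
  show ?thesis
  proof (rule summable_on_comparison_test[OF summable])
    fix d
    assume d: "d \<in> pos_tuples m"
    have "(\<integral>u. norm (Omega_monomial m n x d u) \<partial>cube (Nw n m)) = (\<Prod>l=1..Nw n m.
        norm (vcoord_scale m n x l) ^ monomial_exponent m n d l / real (monomial_exponent m n d l))"
      by (rule integral_Omega_monomial(3)[OF assms(1) d])
    also have "\<dots> \<le> (\<Prod>l=1..Nw n m. norm (vcoord_scale m n x l) ^ monomial_exponent m n d l)"
    proof (rule prod_mono)
      fix l
      assume "l \<in> {1..Nw n m}"
      then have "1 \<le> real (monomial_exponent m n d l)"
        using monomial_exponent_pos[OF d assms(1), of l n] by simp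
      then show "0 \<le> norm (vcoord_scale m n x l) ^ monomial_exponent m n d l / real (monomial_exponent m n d l)
          \<and> norm (vcoord_scale m n x l) ^ monomial_exponent m n d l / real (monomial_exponent m n d l)
            \<le> norm (vcoord_scale m n x l) ^ monomial_exponent m n d l"
        using divide_left_mono[of 1 "real (monomial_exponent m n d l)"] by simp
    qed
    also have "\<dots> = norm (Omega_monomial m n x d (\<lambda>_. 1))"
      by (simp add: Omega_monomial_def norm_mult norm_power flip: prod_norm)
    also have "\<dots> = (\<Prod>k=1..m. q k ^ d k)"
      by (simp add: Omega_monomial_eq[OF assms(1) d] q_def norm_power flip: prod_norm)
    finally show "(\<integral>u. norm (Omega_monomial m n x d u) \<partial>cube (Nw n m)) \<le> (\<Prod>k=1..m. q k ^ d k)" .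
  qed simp
qed

theorem lemma9p2:
  fixes m :: nat and n :: "nat \<Rightarrow> nat" and x :: "nat \<Rightarrow> complex"
  assumes "m \<ge> 1"
    and "\<forall>i\<in>{1..m}. n i > 0"
    and "\<forall>i\<in>{1..m}. norm (x i) < 1"
  shows "has_bochner_integral (cube (Nw n m)) (Omega_coeff m n x) (Li m n x)"
proof -
  have "Li m n x = (\<Sum>\<^sub>\<infinity>d\<in>pos_tuples m. Li_term m n x (partial_sums m d))"
    by (simp only: Li_eq_infsum infsum_Li_index_eq_infsum_pos_tuples)
  also have "\<dots> = (\<Sum>\<^sub>\<infinity>d\<in>pos_tuples m. integral\<^sup>L (cube (Nw n m)) (Omega_monomial m n x d))"
    using integral_Omega_monomial_eq_Li_term[OF assms(1,2)] by (intro infsum_cong) simp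
  finally have Li: "Li m n x = \<dots>" .
  have "AE u in cube (Nw n m). ((\<lambda>d. Omega_monomial m n x d u) has_sum Omega_coeff m n x u) (pos_tuples m)"
    using AE_cube_coordinates_pos AE_space
  proof eventually_elim
    case (elim u)
    then show ?case by (intro Omega_coeff_has_sum assms) (auto simp: space_cube PiE_iff)
  qed
  then show ?thesis
    unfolding Li
    by (intro has_bochner_integral_infsum countable_pos_tuples infinite_pos_tuples assms(1)
        integral_Omega_monomial(1) summable_on_integral_norm_Omega_monomial assms Omega_coeff_measurable)
qed

end
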